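(* Let $x_1 \geq x_2 \geq \dots \geq x_m$ be the side lengths of a finite set of squares with $x_1 < \frac{1}{2}$. If the total area $\sum_i x_i^2$ is at most $\frac{1}{2} + 2\left(x_1 - \frac{1}{2}\right)^2$, then \textsc{Shelf Packing} packs all of these squares into a unit square.
   Context: \textsc{Shelf Packing} (of Moon and Moser) into an axis-parallel rectangular container processes the squares in order of non-increasing side length and places them axis-parallel. The container is filled by horizontal "shelves" stacked from the bottom upward. A shelf is opened by the first square placed in it, whose side length determines the shelf's height; the shelf's bottom is the top of the previous shelf (or the container's bottom for the first shelf). Subsequent squares are placed next to each other along the bottom of the current shelf, from left to right. When the next square no longer fits into the remaining width of the current shelf, a new shelf is opened on top of the current one, starting with that square. \textsc{Shelf Packing} succeeds if all squares are placed inside the container, and fails if some square would have to be placed in a shelf exceeding the container's height. *)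

theory Defs
  imports Main "HOL.Real"
begin

text \<open>Shelf Packing (Moon and Moser) into a container of width W and height H,
  placed with lower-left corner at the origin. The squares are given as a list of
  side lengths, in the order they are processed (non-increasing).
  The result is the list of lower-left corners of the placed squares.
  The auxiliary state is (current x-position in the shelf, shelf bottom, shelf height).\<close>

fun shelf_aux :: "real \<Rightarrow> real \<times> real \<times> real \<Rightarrow> real list \<Rightarrow> (real \<times> real) list" where
  "shelf_aux W st [] = []"
| "shelf_aux W (cx, b, h) (s # ss) =
     (if cx + s \<le> W
      then (cx, b) # shelf_aux W (cx + s, b, h) ss
      else (0, b + h) # shelf_aux W (s, b + h, s) ss)"

fun shelf_positions :: "real \<Rightarrow> real list \<Rightarrow> (real \<times> real) list" where
  "shelf_positions W [] = []"
| "shelf_positions W (s # ss) = (0, 0) # shelf_aux W (s, 0, s) ss"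

definition shelf_packing_succeeds :: "real \<Rightarrow> real \<Rightarrow> real list \<Rightarrow> bool" where
  "shelf_packing_succeeds W H xs \<longleftrightarrow>
     (\<forall>i < length xs.
        fst (shelf_positions W xs ! i) + xs ! i \<le> W \<and>
        snd (shelf_positions W xs ! i) + xs ! i \<le> H)"

end

theory Submission
  imports Defs
begin

text \<open>Let \<open>h\<^sub>1\<close> be the largest square and suppose some square sticks out of the top of a
  \<open>W \<times> H\<close> container. When a shelf is closed because the next square \<open>s\<close> does not fit,
  its squares after the first one fill a width of more than \<open>W - s - h\<close> (where \<open>h \<le> h\<^sub>1\<close> is
  the shelf height) with squares of side at least \<open>s\<close>; together with \<open>s\<^sup>2\<close> this is an area
  of at least \<open>(W - h\<^sub>1) s\<close>. Summing over the shelves, the area of the squares placed exceeds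
  \<open>h\<^sub>1\<^sup>2 + (W - h\<^sub>1)(H - h\<^sub>1)\<close>. For \<open>W = H = 1\<close> this bound equals
  \<open>1/2 + 2 (h\<^sub>1 - 1/2)\<^sup>2\<close>.\<close>

lemma shelf_aux_fits_width:
  assumes "\<forall>x\<in>set ss. x \<le> W" "i < length ss"
  shows "fst (shelf_aux W st ss ! i) + ss ! i \<le> W"
  using assms
proof (induction ss arbitrary: st i)
  case Nil
  then show ?case by simp
next
  case (Cons s ss)
  obtain cx b h where "st = (cx, b, h)" by (cases st)
  with Cons show ?case by (cases i) auto
qed

lemma shelf_positions_fit_width:
  assumes "\<forall>x\<in>set xs. x \<le> W" "i < length xs"
  shows "fst (shelf_positions W xs ! i) + xs ! i \<le> W"
  using assms shelf_aux_fits_width by (cases xs; cases i) auto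

text \<open>In state \<open>(cx, b, h)\<close>, with \<open>l\<close> the last square placed, the area of the squares
  placed so far is at least \<open>h\<^sub>1\<^sup>2 + (W - h\<^sub>1)(b + h - h\<^sub>1) + (cx - h) l\<close>: the first square,
  \<open>W - h\<^sub>1\<close> per unit height of each later shelf, and the current shelf beyond its first
  square.\<close>

lemma shelf_aux_step_area_bound:
  assumes "h \<le> cx" "h \<le> h1" "0 \<le> s" "s \<le> l" "l \<le> h"
    and "h1\<^sup>2 + (W - h1) * (b + h - h1) + (cx - h) * l \<le> A"
  obtains x y cx' b' h' where
    "shelf_aux W (cx, b, h) (s # ss) = (x, y) # shelf_aux W (cx', b', h') ss"
    "y + s \<le> b' + h'" "h' \<le> cx'" "h' \<le> h1" "s \<le> h'"
    "h1\<^sup>2 + (W - h1) * (b' + h' - h1) + (cx' - h') * s \<le> A + s\<^sup>2"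
proof (cases "cx + s \<le> W")
  case True
  have "(cx + s - h) * s \<le> (cx - h) * l + s\<^sup>2"
    using mult_left_mono[OF \<open>s \<le> l\<close>, of "cx - h"] \<open>h \<le> cx\<close>
    by (simp add: algebra_simps power2_eq_square)
  with True assms show thesis
    by (intro that[of cx b "cx + s" b h]) auto
next
  case False
  have "(W - s - h) * s \<le> (cx - h) * l"
    using mult_right_mono[of "W - s - h" "cx - h" s] mult_left_mono[OF \<open>s \<le> l\<close>, of "cx - h"]
      False assms(1,3) by linarith
  moreover have "(W - h1) * s \<le> (W - s - h) * s + s\<^sup>2"
    using mult_right_mono[OF \<open>h \<le> h1\<close> \<open>0 \<le> s\<close>] by (simp add: algebra_simps power2_eq_square)
  ultimately have "(W - h1) * (b + h + s - h1) \<le> (W - h1) * (b + h - h1) + (cx - h) * l + s\<^sup>2"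
    by (simp add: algebra_simps)
  with False assms show thesis
    by (intro that[of 0 "b + h" s "b + h" s]) auto
qed

lemma shelf_aux_overflow_area:
  assumes "sorted_wrt (\<ge>) ss" "\<forall>x\<in>set ss. 0 \<le> x \<and> x \<le> l"
    and "h \<le> cx" "h \<le> h1" "h1 < W" "l \<le> h"
    and "h1\<^sup>2 + (W - h1) * (b + h - h1) + (cx - h) * l \<le> A"
    and "i < length ss" "H < snd (shelf_aux W (cx, b, h) ss ! i) + ss ! i"
  shows "h1\<^sup>2 + (W - h1) * (H - h1) < A + (\<Sum>x\<leftarrow>ss. x\<^sup>2)"
  using assms
proof (induction ss arbitrary: cx b h l A i)
  case Nil
  then show ?case by simp
next
  case (Cons s ss)
  obtain x y cx' b' h' where step:
    "shelf_aux W (cx, b, h) (s # ss) = (x, y) # shelf_aux W (cx', b', h') ss"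
    "y + s \<le> b' + h'" "h' \<le> cx'" "h' \<le> h1" "s \<le> h'"
    "h1\<^sup>2 + (W - h1) * (b' + h' - h1) + (cx' - h') * s \<le> A + s\<^sup>2"
    by (rule shelf_aux_step_area_bound[where l = l and ss = ss]) (use Cons.prems in auto)
  have rest_nonneg: "0 \<le> (\<Sum>x\<leftarrow>ss. x\<^sup>2)"
    by (rule sum_list_nonneg) auto
  show ?case
  proof (cases i)
    case 0
    with Cons.prems step have "H - h1 < b' + h' - h1" by auto
    then have "(W - h1) * (H - h1) < (W - h1) * (b' + h' - h1)"
      using \<open>h1 < W\<close> by simp
    moreover have "0 \<le> (cx' - h') * s"
      using step(3) Cons.prems(2) by simp
    ultimately show ?thesis using step(6) rest_nonneg by simp
  next
    case (Suc j)
    have "h1\<^sup>2 + (W - h1) * (H - h1) < A + s\<^sup>2 + (\<Sum>x\<leftarrow>ss. x\<^sup>2)"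
      using Cons.IH[of s h' cx' b' "A + s\<^sup>2" j] Cons.prems step Suc by auto
    then show ?thesis by simp
  qed
qed

lemma shelf_positions_overflow_area:
  assumes "sorted_wrt (\<ge>) xs" "\<forall>x\<in>set xs. 0 \<le> x" "hd xs < W"
    and "i < length xs" "H < snd (shelf_positions W xs ! i) + xs ! i"
  shows "(hd xs)\<^sup>2 + (W - hd xs) * (H - hd xs) < (\<Sum>x\<leftarrow>xs. x\<^sup>2)"
proof -
  obtain h1 ss where xs: "xs = h1 # ss"
    using \<open>i < length xs\<close> by (cases xs) auto
  show ?thesis
  proof (cases i)
    case 0
    with assms xs have "(W - h1) * (H - h1) < 0"
      by (simp add: mult_pos_neg)
    moreover have "0 \<le> (\<Sum>x\<leftarrow>ss. x\<^sup>2)"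
      by (rule sum_list_nonneg) auto
    ultimately show ?thesis
      using xs by simp
  next
    case (Suc j)
    then have "h1\<^sup>2 + (W - h1) * (H - h1) < h1\<^sup>2 + (\<Sum>x\<leftarrow>ss. x\<^sup>2)"
      using assms xs by (intro shelf_aux_overflow_area[where l = h1 and cx = h1 and b = 0]) auto
    then show ?thesis using xs by simp
  qed
qed

theorem shelf_packing_succeeds_if_area_le:
  assumes "sorted_wrt (\<ge>) xs" "\<forall>x\<in>set xs. 0 \<le> x" "hd xs < W"
    and "(\<Sum>x\<leftarrow>xs. x\<^sup>2) \<le> (hd xs)\<^sup>2 + (W - hd xs) * (H - hd xs)"
  shows "shelf_packing_succeeds W H xs"
proof -
  have "\<forall>x\<in>set xs. x \<le> W"
    using assms(1,3) by (cases xs) auto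
  then show ?thesis
    unfolding shelf_packing_succeeds_def
    using shelf_positions_fit_width shelf_positions_overflow_area[OF assms(1-3)] assms(4)
    by (meson not_le order.strict_trans2)
qed

theorem lemma4:
  fixes xs :: "real list"
  assumes "xs \<noteq> []"
    and "sorted_wrt (\<ge>) xs"
    and "\<forall>x \<in> set xs. x > 0"
    and "hd xs < 1/2"
    and "(\<Sum>x\<leftarrow>xs. x^2) \<le> 1/2 + 2 * (hd xs - 1/2)^2"
  shows "shelf_packing_succeeds 1 1 xs"
proof (rule shelf_packing_succeeds_if_area_le)
  have "1/2 + 2 * (hd xs - 1/2)\<^sup>2 = (hd xs)\<^sup>2 + (1 - hd xs) * (1 - hd xs)"
    by (simp add: power2_eq_square algebra_simps)
  then show "(\<Sum>x\<leftarrow>xs. x\<^sup>2) \<le> (hd xs)\<^sup>2 + (1 - hd xs) * (1 - hd xs)"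
    using assms(5) by simp
qed (use assms in auto)

end
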